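(* Let $d \ge 1$ and $p>1$. Let $\mu$ be the measure on $\mathbb{R}^d$ with density $\exp(-|x|_1)$, and also denote by $\mu$ its restriction to $\mathbb{R}^d_+=(0,\infty)^d$. Then $M_{\mu}^{\mathcal{B}}$ is bounded on $L^p(\mathbb{R}^d,d\mu)$ if and only if $M_{\mu}^{\mathcal{B}_+}$ is bounded on $L^p(\mathbb{R}^d_+,d\mu)$; and $M_{\mu}^{\mathcal{B}}$ is of weak type $(1,1)$ with respect to $(\mathbb{R}^d,d\mu)$ if and only if $M_{\mu}^{\mathcal{B}_+}$ is of weak type $(1,1)$ with respect to $(\mathbb{R}^d_+,d\mu)$. The same two equivalences hold between $M_{\mu}^{\mathcal{Q}}$ and $M_{\mu}^{\mathcal{Q}_+}$, and between $M_{\mu}^{\mathcal{D}}$ and $M_{\mu}^{\mathcal{D}_+}$.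
   Context: $|x|_q$ denotes the $\ell^q$ norm on $\mathbb{R}^d$. For a metric $\rho$ and measure $\eta$, the non-centered maximal operator is $M_\eta f(x)=\sup \frac{1}{\eta(B)}\int_B|f|\,d\eta$ over open $\rho$-balls $B\ni x$ with $\eta(B)>0$. $M_{\mu}^{\mathcal{B}}, M_{\mu}^{\mathcal{Q}}, M_{\mu}^{\mathcal{D}}$ are these operators on $\mathbb{R}^d$ with the $\ell^2$, $\ell^\infty$, $\ell^1$ metrics respectively. $M_{\mu}^{\mathcal{B}_+}f(x)=\sup \frac{1}{\mu(B)}\int_B|f|\,d\mu$, $x\in\mathbb{R}^d_+$, where the supremum is over sets $B=\{y\in\mathbb{R}^d_+:|y-m|_2<r\}$ with $m\in\mathbb{R}^d_+$, $r>0$, containing $x$ (the open balls of the metric space $(\mathbb{R}^d_+,\rho_2)$); $M_{\mu}^{\mathcal{Q}_+}$ and $M_{\mu}^{\mathcal{D}_+}$ are defined analogously with $|\cdot|_\infty$ and $|\cdot|_1$ in place of $|\cdot|_2$. *)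

theory Defs
  imports "HOL-Analysis.Analysis"
begin

definition l1norm :: "real ^ 'n \<Rightarrow> real" where
  "l1norm x = (\<Sum>i\<in>UNIV. \<bar>x $ i\<bar>)"

definition linfnorm :: "real ^ 'n \<Rightarrow> real" where
  "linfnorm x = (MAX i\<in>UNIV. \<bar>x $ i\<bar>)"

definition rho2 :: "real ^ 'n \<Rightarrow> real ^ 'n \<Rightarrow> real" where
  "rho2 x y = norm (x - y)"

definition rhoinf :: "real ^ 'n \<Rightarrow> real ^ 'n \<Rightarrow> real" where
  "rhoinf x y = linfnorm (x - y)"

definition rho1 :: "real ^ 'n \<Rightarrow> real ^ 'n \<Rightarrow> real" where
  "rho1 x y = l1norm (x - y)"

definition orthant :: "(real ^ 'n) set" where
  "orthant = {x. \<forall>i. 0 < x $ i}"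

definition mu :: "(real ^ 'n) measure" where
  "mu = density lborel (\<lambda>x. ennreal (exp (- l1norm x)))"

definition mu_plus :: "(real ^ 'n) measure" where
  "mu_plus = restrict_space mu orthant"

definition rho_balls :: "('a \<Rightarrow> 'a \<Rightarrow> real) \<Rightarrow> 'a measure \<Rightarrow> 'a set set" where
  "rho_balls \<rho> M = {B. \<exists>m\<in>space M. \<exists>r>0. B = {y\<in>space M. \<rho> y m < r}}"

definition maxop :: "('a \<Rightarrow> 'a \<Rightarrow> real) \<Rightarrow> 'a measure \<Rightarrow> ('a \<Rightarrow> real) \<Rightarrow> 'a \<Rightarrow> ennreal" where
  "maxop \<rho> M f x =
     (SUP B \<in> {B \<in> rho_balls \<rho> M. x \<in> B \<and> 0 < emeasure M B}.
        (\<integral>\<^sup>+ y \<in> B. ennreal \<bar>f y\<bar> \<partial>M) / emeasure M B)"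

definition enn_powr :: "ennreal \<Rightarrow> real \<Rightarrow> ennreal" where
  "enn_powr t p = (if t = \<infinity> then \<infinity> else ennreal (enn2real t powr p))"

definition in_Lp :: "'a measure \<Rightarrow> real \<Rightarrow> ('a \<Rightarrow> real) \<Rightarrow> bool" where
  "in_Lp M p f \<longleftrightarrow> f \<in> borel_measurable M \<and> (\<integral>\<^sup>+ x. ennreal (\<bar>f x\<bar> powr p) \<partial>M) < \<infinity>"

(* maximal operator bounded on L^p(M):  ||Mf||_p <= C ||f||_p  (stated with p-th powers) *)
definition Lp_bounded :: "('a \<Rightarrow> 'a \<Rightarrow> real) \<Rightarrow> 'a measure \<Rightarrow> real \<Rightarrow> bool" where
  "Lp_bounded \<rho> M p \<longleftrightarrow>
     (\<exists>C::real. \<forall>f. in_Lp M p f \<longrightarrow>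
        (\<integral>\<^sup>+ x. enn_powr (maxop \<rho> M f x) p \<partial>M)
          \<le> ennreal C * (\<integral>\<^sup>+ x. ennreal (\<bar>f x\<bar> powr p) \<partial>M))"

definition weak11 :: "('a \<Rightarrow> 'a \<Rightarrow> real) \<Rightarrow> 'a measure \<Rightarrow> bool" where
  "weak11 \<rho> M \<longleftrightarrow>
     (\<exists>C::real. \<forall>f. in_Lp M 1 f \<longrightarrow> (\<forall>t::real. t > 0 \<longrightarrow>
        emeasure M {x \<in> space M. ennreal t < maxop \<rho> M f x}
          \<le> ennreal (C / t) * (\<integral>\<^sup>+ x. ennreal \<bar>f x\<bar> \<partial>M)))"

end

theory Submission
  imports Defs
begin

text \<open>
  The three metrics come from norms \<open>N\<close> that depend monotonically on \<open>\<bar>x\<bar>\<close>, and \<open>mu\<close> is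
  invariant under the \<open>2^d\<close> coordinate reflections, which permute the orthants.

  Restriction: a ball of \<open>R^d_+\<close> centred at \<open>m \<in> R^d_+\<close> is the trace of the ball \<open>B(m, r)\<close>
  of \<open>R^d\<close>, and \<open>\<bar>\<bar>y\<bar> - m\<bar> \<le> \<bar>y - m\<bar>\<close> componentwise, so the reflections fold
  \<open>B(m, r)\<close> into its trace: the trace carries at least \<open>2^-d\<close> of the mass of \<open>B(m, r)\<close>.
  Hence \<open>M_+ g \<le> 2^d M g'\<close> on \<open>R^d_+\<close>, where \<open>g'\<close> is \<open>g\<close> extended by zero.

  Extension: for the same reason the map \<open>x \<mapsto> \<bar>x\<bar>\<close> sends \<open>B(m, r)\<close> into the trace of
  \<open>B(\<bar>m\<bar>, r)\<close>, whose mass is at most that of \<open>B(m, r)\<close> (reflect it back), so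
  \<open>M f(x) \<le> \<Sum>\<^sub>S M_+ (f \<circ> \<sigma>\<^sub>S)(\<bar>x\<bar>)\<close> off the coordinate hyperplanes. As \<open>\<bar>m\<bar>\<close> may lie on the
  boundary of \<open>R^d_+\<close>, the trace of \<open>B(\<bar>m\<bar>, r)\<close> is exhausted by admissible balls whose
  centres are pushed into the interior.

  Both pointwise bounds transfer \<open>L^p\<close> and weak \<open>(1,1)\<close> bounds, because \<open>x \<mapsto> \<bar>x\<bar>\<close> maps
  \<open>mu\<close> onto \<open>2^d mu_plus\<close>.
\<close>

section \<open>Coordinate reflections and the orthant\<close>

definition reflect :: "'n::finite set \<Rightarrow> real^'n \<Rightarrow> real^'n" where
  "reflect S x = (\<chi> i. if i \<in> S then - x$i else x$i)"

lemma reflect_nth [simp]: "reflect S x $ i = (if i \<in> S then - x$i else x$i)"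
  by (simp add: reflect_def)

lemma abs_vec_nth [simp]: "\<bar>x\<bar> $ i = \<bar>x $ i\<bar>" for x :: "real^'n"
  by (simp add: abs_vec_def)

lemma reflect_reflect [simp]: "reflect S (reflect S x) = x"
  by (simp add: vec_eq_iff)

lemma reflect_diff: "reflect S (x - y) = reflect S x - reflect S y"
  by (simp add: vec_eq_iff)

lemma abs_reflect [simp]: "\<bar>reflect S x\<bar> = \<bar>x\<bar>"
  by (simp add: vec_eq_iff)

lemma reflect_abs: "reflect {i. x$i < 0} x = \<bar>x\<bar>"
  by (simp add: vec_eq_iff)

lemma l1norm_reflect [simp]: "l1norm (reflect S x) = l1norm x"
  unfolding l1norm_def by (intro sum.cong) auto

lemma borel_measurable_l1norm [measurable]: "l1norm \<in> borel_measurable borel"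
  unfolding l1norm_def by measurable

lemma borel_measurable_reflect [measurable]:
  "(reflect S :: real^'n::finite \<Rightarrow> _) \<in> borel_measurable borel"
proof (rule borel_measurable_continuous_onI)
  show "continuous_on UNIV (reflect S :: real^'n \<Rightarrow> _)"
    unfolding reflect_def
  proof (intro continuous_on_vec_lambda)
    fix i
    show "continuous_on UNIV (\<lambda>x::real^'n. if i \<in> S then - x$i else x$i)"
      by (cases "i \<in> S") (auto intro!: continuous_intros continuous_on_component)
  qed
qed

lemma borel_measurable_abs_vec [measurable]:
  fixes f :: "'a \<Rightarrow> real^'n"
  assumes [measurable]: "f \<in> borel_measurable M"
  shows "(\<lambda>x. \<bar>f x\<bar>) \<in> borel_measurable M"
proof -
  have "continuous_on UNIV (abs :: real^'n \<Rightarrow> _)"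
    unfolding abs_vec_def
    by (intro continuous_on_vec_lambda) (auto intro!: continuous_intros continuous_on_component)
  then have "(abs :: real^'n \<Rightarrow> _) \<in> borel_measurable borel"
    by (rule borel_measurable_continuous_onI)
  then show ?thesis by measurable
qed

lemma open_orthant: "open (orthant :: (real^'n::finite) set)"
proof -
  have "orthant = (\<Inter>i\<in>UNIV. {x::real^'n. 0 < x$i})" by (auto simp: orthant_def)
  moreover have "open (\<Inter>i\<in>UNIV. {x::real^'n. 0 < x$i})"
    by (rule open_INT) (auto intro: open_halfspace_component_gt_cart)
  ultimately show ?thesis by simp
qed

lemma orthant_borel [measurable]: "orthant \<in> sets borel"
  using open_orthant by (rule borel_open)

lemma abs_in_orthant: "(\<forall>i. x$i \<noteq> 0) \<Longrightarrow> \<bar>x\<bar> \<in> orthant"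
  by (simp add: orthant_def)

lemma abs_orthant: "m \<in> orthant \<Longrightarrow> \<bar>m\<bar> = m"
  by (auto simp: vec_eq_iff orthant_def less_imp_le)

lemma reflect_in_orthant_iff:
  assumes "\<forall>i. y$i \<noteq> 0"
  shows "reflect S y \<in> orthant \<longleftrightarrow> S = {i. y$i < 0}"
proof
  assume "reflect S y \<in> orthant"
  then have "\<forall>i. 0 < (if i \<in> S then - y$i else y$i)" by (simp add: orthant_def)
  then show "S = {i. y$i < 0}"
    by (auto, metis neg_0_less_iff_less less_asym, metis less_asym)
qed (use assms in \<open>auto simp: orthant_def\<close>)

lemma sum_indicator_orthant_reflect:
  assumes "\<forall>i. y$i \<noteq> 0"
  shows "(\<Sum>S\<in>UNIV. indicator orthant (reflect S y) :: ennreal) = 1"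
proof -
  have "(\<Sum>S\<in>UNIV. indicator orthant (reflect S y) :: ennreal) = (\<Sum>S\<in>UNIV. if S = {i. y$i < 0} then 1 else 0)"
    by (intro sum.cong) (auto simp: reflect_in_orthant_iff[OF assms] indicator_def)
  then show ?thesis by simp
qed

section \<open>The measures \<open>mu\<close> and \<open>mu_plus\<close>\<close>

lemma space_mu [simp]: "space mu = UNIV"
  by (simp add: mu_def)

lemma sets_mu [simp, measurable_cong]: "sets mu = sets borel"
  by (simp add: mu_def)

lemma space_mu_plus [simp]: "space mu_plus = orthant"
  by (simp add: mu_plus_def)

lemma sets_mu_plus: "A \<in> sets mu_plus \<longleftrightarrow> A \<subseteq> orthant \<and> A \<in> sets borel"
  unfolding mu_plus_def by (subst sets_restrict_space_iff) auto

lemma borel_measurable_mu_plus: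
  "h \<in> borel_measurable borel \<Longrightarrow> h \<in> borel_measurable mu_plus"
  unfolding mu_plus_def by (rule measurable_restrict_space1) (simp cong: measurable_cong_sets)

lemma nn_integral_mu_plus: "integral\<^sup>N mu_plus G = (\<integral>\<^sup>+ z. G z * indicator orthant z \<partial>mu)"
  unfolding mu_plus_def by (rule nn_integral_restrict_space) simp

lemma nn_integral_mu_plus_le: "integral\<^sup>N mu_plus G \<le> integral\<^sup>N mu G"
  unfolding nn_integral_mu_plus by (intro nn_integral_mono) (auto simp: indicator_def)

lemma set_nn_integral_mu_plus:
  "A \<subseteq> orthant \<Longrightarrow> (\<integral>\<^sup>+ y \<in> A. h y \<partial>mu_plus) = (\<integral>\<^sup>+ y \<in> A. h y \<partial>mu)"
  unfolding nn_integral_mu_plus by (intro nn_integral_cong) (auto simp: indicator_def)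

lemma emeasure_mu_plus: "A \<subseteq> orthant \<Longrightarrow> emeasure mu_plus A = emeasure mu A"
  unfolding mu_plus_def by (intro emeasure_restrict_space) auto

lemma nn_integral_indicator_mu_plus:
  "A \<in> sets borel \<Longrightarrow> (\<integral>\<^sup>+ z. indicator A z \<partial>mu_plus) = emeasure mu (orthant \<inter> A)"
proof -
  assume [measurable]: "A \<in> sets borel"
  have "(\<integral>\<^sup>+ z. indicator A z \<partial>mu_plus) = (\<integral>\<^sup>+ z. indicator (orthant \<inter> A) z \<partial>mu)"
    unfolding nn_integral_mu_plus by (intro nn_integral_cong) (auto split: split_indicator)
  then show ?thesis by simp
qed

lemma emeasure_mu_le_lborel:
  fixes A :: "(real^'n::finite) set"
  assumes "A \<in> sets borel"
  shows "emeasure mu A \<le> emeasure lborel A"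
proof -
  have "emeasure mu A = (\<integral>\<^sup>+ x. ennreal (exp (- l1norm x)) * indicator A x \<partial>lborel)"
    unfolding mu_def using assms by (subst emeasure_density) auto
  also have "\<dots> \<le> (\<integral>\<^sup>+ x. indicator A x \<partial>lborel)"
  proof (rule nn_integral_mono)
    fix x :: "real^'n"
    have "0 \<le> l1norm x" unfolding l1norm_def by (auto intro: sum_nonneg)
    then show "ennreal (exp (- l1norm x)) * indicator A x \<le> indicator A x"
      by (cases "x \<in> A") auto
  qed
  finally show ?thesis using assms by simp
qed

lemma lborel_reflect: "distr lborel borel (reflect S) = (lborel :: (real^'n::finite) measure)"
proof -
  define c :: "real^'n \<Rightarrow> real" where "c j = (if j \<in> (\<lambda>i. axis i 1) ` S then -1 else 1)" for j
  define T where "T x = 0 + (\<Sum>j\<in>Basis. (c j * (x \<bullet> j)) *\<^sub>R j)" for x :: "real^'n"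
  have "lborel = density (distr lborel borel T) (\<lambda>_. (\<Prod>j\<in>Basis. \<bar>c j\<bar>))"
    unfolding T_def by (rule lborel_affine_euclidean) (auto simp: c_def)
  moreover have "(\<Prod>j\<in>Basis. \<bar>c j\<bar>) = 1"
    by (intro prod.neutral) (auto simp: c_def)
  moreover have "T x $ k = reflect S x $ k" for x k
  proof -
    have "T x $ k = (\<Sum>i\<in>UNIV. (c (axis i 1) * (x \<bullet> axis i 1)) * (axis i (1::real) $ k))"
      unfolding T_def Basis_vec_def
      by (simp add: sum.reindex inj_on_def axis_eq_axis UNION_singleton_eq_range)
    also have "\<dots> = c (axis k 1) * x $ k"
      by (subst sum.remove[of _ k]) (auto simp: inner_axis, simp add: axis_def)
    finally show ?thesis by (auto simp: c_def axis_eq_axis)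
  qed
  then have "T = reflect S" by (simp add: fun_eq_iff vec_eq_iff)
  ultimately show ?thesis by (simp add: density_1)
qed

lemma nn_integral_mu_reflect:
  fixes F :: "real^'n::finite \<Rightarrow> ennreal"
  assumes [measurable]: "F \<in> borel_measurable borel"
  shows "(\<integral>\<^sup>+ z. F (reflect S z) \<partial>mu) = integral\<^sup>N mu F"
proof -
  let ?w = "\<lambda>x::real^'n. ennreal (exp (- l1norm x))"
  have "(\<integral>\<^sup>+ z. F (reflect S z) \<partial>mu) = (\<integral>\<^sup>+ z. (\<lambda>y. ?w y * F y) (reflect S z) \<partial>lborel)"
    unfolding mu_def by (subst nn_integral_density) auto
  also have "\<dots> = (\<integral>\<^sup>+ y. ?w y * F y \<partial>distr lborel borel (reflect S))"
    by (subst nn_integral_distr) auto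
  also have "\<dots> = integral\<^sup>N mu F"
    unfolding mu_def lborel_reflect by (subst nn_integral_density) auto
  finally show ?thesis .
qed

lemma AE_mu_coords_nonzero: "AE x in (mu :: (real^'n::finite) measure). \<forall>i. x$i \<noteq> 0"
proof -
  have "AE x in (lborel :: (real^'n) measure). x$i \<noteq> 0" for i
  proof -
    have "{x::real^'n. x$i = 0} \<in> null_sets lebesgue"
      using negligible_standard_hyperplane_cart negligible_iff_null_sets by blast
    moreover have "{x::real^'n. x$i = 0} \<in> sets lborel" by simp
    ultimately have "{x::real^'n. x$i = 0} \<in> null_sets lborel"
      using null_sets_completion_iff by blast
    then show ?thesis by (rule AE_I') auto
  qed
  then have "AE x in (lborel :: (real^'n) measure). \<forall>i. x$i \<noteq> 0"
    by (subst AE_all_countable) auto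
  then show ?thesis
    unfolding mu_def by (subst AE_density) (auto elim: AE_mp)
qed

lemma nn_integral_mu_eq_sum_orthants:
  fixes F :: "real^'n::finite \<Rightarrow> ennreal"
  assumes [measurable]: "F \<in> borel_measurable borel"
  shows "integral\<^sup>N mu F = (\<Sum>S\<in>UNIV. \<integral>\<^sup>+ z. F (reflect S z) \<partial>mu_plus)"
proof -
  have "integral\<^sup>N mu F = (\<integral>\<^sup>+ y. (\<Sum>S\<in>UNIV. F y * indicator orthant (reflect S y)) \<partial>mu)"
    using AE_mu_coords_nonzero
    by (intro nn_integral_cong_AE, eventually_elim)
       (simp add: sum_distrib_left[symmetric] sum_indicator_orthant_reflect)
  also have "\<dots> = (\<Sum>S\<in>UNIV. \<integral>\<^sup>+ y. F y * indicator orthant (reflect S y) \<partial>mu)"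
    by (rule nn_integral_sum) auto
  also have "\<dots> = (\<Sum>S\<in>UNIV. \<integral>\<^sup>+ z. F (reflect S z) * indicator orthant z \<partial>mu)"
  proof (rule sum.cong)
    fix S
    show "(\<integral>\<^sup>+ y. F y * indicator orthant (reflect S y) \<partial>mu)
        = (\<integral>\<^sup>+ z. F (reflect S z) * indicator orthant z \<partial>mu)"
      using nn_integral_mu_reflect[of "\<lambda>y. F y * indicator orthant (reflect S y)" S] by simp
  qed simp
  finally show ?thesis by (simp add: nn_integral_mu_plus)
qed

lemma nn_integral_mu_abs:
  fixes F :: "real^'n::finite \<Rightarrow> ennreal"
  assumes [measurable]: "F \<in> borel_measurable borel"
  shows "(\<integral>\<^sup>+ y. F \<bar>y\<bar> \<partial>mu) = 2 ^ CARD('n) * integral\<^sup>N mu_plus F"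
proof -
  have "(\<integral>\<^sup>+ y. F \<bar>y\<bar> \<partial>mu) = (\<Sum>S\<in>UNIV. \<integral>\<^sup>+ z. F \<bar>reflect S z\<bar> \<partial>mu_plus)"
    by (rule nn_integral_mu_eq_sum_orthants) measurable
  also have "\<dots> = (\<Sum>S\<in>(UNIV :: 'n set set). integral\<^sup>N mu_plus F)"
    by (intro sum.cong nn_integral_cong) (auto simp: abs_orthant)
  finally show ?thesis by simp
qed

lemma emeasure_mu_abs_vimage:
  assumes "A \<subseteq> orthant" "A \<in> sets borel"
  shows "emeasure mu {x. \<bar>x\<bar> \<in> A} = 2 ^ CARD('n::finite) * emeasure mu_plus (A :: (real^'n) set)"
proof -
  have [measurable]: "A \<in> sets borel" by fact
  have "emeasure mu {x. \<bar>x\<bar> \<in> A} = (\<integral>\<^sup>+ x. indicator {x. \<bar>x\<bar> \<in> A} x \<partial>mu)"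
    by (rule nn_integral_indicator[symmetric]) measurable
  also have "\<dots> = (\<integral>\<^sup>+ x. indicator A \<bar>x\<bar> \<partial>mu)"
    by (simp add: indicator_def)
  finally show ?thesis
    using assms by (simp add: nn_integral_mu_abs sets_mu_plus)
qed

lemma nn_integral_mu_plus_reflect_le:
  assumes [measurable]: "F \<in> borel_measurable borel"
  shows "(\<integral>\<^sup>+ z. F (reflect S z) \<partial>mu_plus) \<le> integral\<^sup>N mu F"
  using nn_integral_mu_plus_le[of "\<lambda>z. F (reflect S z)"] nn_integral_mu_reflect[of F S] by simp

lemma in_Lp_reflect:
  assumes "in_Lp mu p f"
  shows "in_Lp mu_plus p (\<lambda>z. f (reflect S z))"
proof -
  have [measurable]: "f \<in> borel_measurable borel"
    using assms by (simp add: in_Lp_def cong: measurable_cong_sets)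
  have "(\<integral>\<^sup>+ z. ennreal (\<bar>f (reflect S z)\<bar> powr p) \<partial>mu_plus) \<le> (\<integral>\<^sup>+ x. ennreal (\<bar>f x\<bar> powr p) \<partial>mu)"
    by (rule nn_integral_mu_plus_reflect_le[of "\<lambda>x. ennreal (\<bar>f x\<bar> powr p)"]) simp
  with assms show ?thesis
    unfolding in_Lp_def by (auto intro: borel_measurable_mu_plus le_less_trans)
qed

lemma borel_measurable_zero_extension:
  fixes g :: "real^'n::finite \<Rightarrow> real"
  assumes "g \<in> borel_measurable mu_plus"
  shows "(\<lambda>y. indicator orthant y * g y) \<in> borel_measurable borel"
proof -
  have "(\<lambda>y. indicator orthant y *\<^sub>R g y) \<in> borel_measurable mu"
    using assms unfolding mu_plus_def by (subst (asm) borel_measurable_restrict_space_iff) simp_all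
  then show ?thesis by (simp cong: measurable_cong_sets)
qed

lemma nn_integral_zero_extension:
  fixes g :: "real^'n::finite \<Rightarrow> real"
  assumes "\<phi> 0 = 0"
  shows "(\<integral>\<^sup>+ y. ennreal (\<phi> (indicator orthant y * g y)) \<partial>mu) = (\<integral>\<^sup>+ y. ennreal (\<phi> (g y)) \<partial>mu_plus)"
  unfolding nn_integral_mu_plus using assms by (intro nn_integral_cong) (auto simp: indicator_def)

lemma in_Lp_zero_extension:
  fixes g :: "real^'n::finite \<Rightarrow> real"
  assumes "in_Lp mu_plus p g" "0 < p"
  shows "in_Lp mu p (\<lambda>y. indicator orthant y * g y)"
  using assms nn_integral_zero_extension[of "\<lambda>t. \<bar>t\<bar> powr p" g] borel_measurable_zero_extension[of g]
  by (simp add: in_Lp_def cong: measurable_cong_sets)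

section \<open>Maximal operators\<close>

lemma maxop_leI:
  assumes "\<And>B. B \<in> rho_balls \<rho> M \<Longrightarrow> x \<in> B \<Longrightarrow> 0 < emeasure M B \<Longrightarrow>
             (\<integral>\<^sup>+ y \<in> B. ennreal \<bar>f y\<bar> \<partial>M) \<le> c * emeasure M B"
  shows "maxop \<rho> M f x \<le> c"
  unfolding maxop_def
proof (rule SUP_least)
  fix B assume B: "B \<in> {B \<in> rho_balls \<rho> M. x \<in> B \<and> 0 < emeasure M B}"
  then have "(\<integral>\<^sup>+ y \<in> B. ennreal \<bar>f y\<bar> \<partial>M) \<le> emeasure M B * c"
    using assms[of B] by (simp add: mult.commute)
  with B show "(\<integral>\<^sup>+ y \<in> B. ennreal \<bar>f y\<bar> \<partial>M) / emeasure M B \<le> c"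
    by (intro divide_le_posI_ennreal) simp_all
qed

lemma set_nn_integral_le_maxop:
  assumes "B \<in> rho_balls \<rho> M" "x \<in> B" "B \<in> sets M" "emeasure M B < \<infinity>"
  shows "(\<integral>\<^sup>+ y \<in> B. ennreal \<bar>f y\<bar> \<partial>M) \<le> maxop \<rho> M f x * emeasure M B"
proof (cases "emeasure M B = 0")
  case True
  with assms(3) have "B \<in> null_sets M" by (simp add: null_sets_def)
  then show ?thesis by (simp add: nn_integral_null_set)
next
  case False
  let ?I = "\<integral>\<^sup>+ y \<in> B. ennreal \<bar>f y\<bar> \<partial>M"
  have "?I / emeasure M B \<le> maxop \<rho> M f x"
    unfolding maxop_def using assms False by (intro SUP_upper) (simp add: zero_less_iff_neq_zero)
  then have "?I / emeasure M B * emeasure M B \<le> maxop \<rho> M f x * emeasure M B"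
    by (rule mult_right_mono) simp
  moreover have "?I / emeasure M B * emeasure M B = ?I"
    using False assms(4) by (simp add: ennreal_divide_times)
  ultimately show ?thesis by simp
qed

lemma set_nn_integral_le_maxop_incseq:
  assumes "incseq B" "\<And>n. B n \<in> rho_balls \<rho> M" "\<And>n. x \<in> B n" "\<And>n. B n \<in> sets M"
    and "emeasure M (\<Union>n. B n) < \<infinity>" and [measurable]: "f \<in> borel_measurable M"
  shows "(\<integral>\<^sup>+ y \<in> (\<Union>n. B n). ennreal \<bar>f y\<bar> \<partial>M) \<le> maxop \<rho> M f x * emeasure M (\<Union>n. B n)"
proof -
  let ?D = "density M (\<lambda>y. ennreal \<bar>f y\<bar>)"
  have "(\<integral>\<^sup>+ y \<in> (\<Union>n. B n). ennreal \<bar>f y\<bar> \<partial>M) = emeasure ?D (\<Union>n. B n)"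
    using assms(4) by (simp add: emeasure_density)
  also have "\<dots> = (SUP n. emeasure ?D (B n))"
    using assms(1,4) by (intro SUP_emeasure_incseq[symmetric]) auto
  also have "\<dots> \<le> maxop \<rho> M f x * emeasure M (\<Union>n. B n)"
  proof (rule SUP_least)
    fix n
    have "B n \<subseteq> (\<Union>n. B n)" by blast
    then have "emeasure M (B n) \<le> emeasure M (\<Union>n. B n)"
      using assms(4) by (intro emeasure_mono) auto
    moreover have "emeasure M (B n) < \<infinity>"
      using calculation assms(5) by (rule le_less_trans)
    ultimately show "emeasure ?D (B n) \<le> maxop \<rho> M f x * emeasure M (\<Union>n. B n)"
      using assms(2-4) set_nn_integral_le_maxop[of "B n" \<rho> M x f]
      by (simp add: emeasure_density) (meson mult_left_mono order_trans zero_le)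
  qed
  finally show ?thesis .
qed

lemma borel_measurable_maxop:
  fixes \<rho> :: "'a::topological_space \<Rightarrow> 'a \<Rightarrow> real"
  assumes "\<And>B. B \<in> rho_balls \<rho> M \<Longrightarrow> open B"
  shows "maxop \<rho> M f \<in> borel_measurable borel"
proof (rule borel_measurableI_greater)
  fix t
  have "open {x. t < maxop \<rho> M f x}"
  proof (subst open_subopen, intro ballI)
    fix x assume "x \<in> {x. t < maxop \<rho> M f x}"
    then obtain B where B: "B \<in> rho_balls \<rho> M" "x \<in> B" "0 < emeasure M B"
      and t: "t < (\<integral>\<^sup>+ y \<in> B. ennreal \<bar>f y\<bar> \<partial>M) / emeasure M B"
      unfolding maxop_def less_SUP_iff by blast
    have "B \<subseteq> {x. t < maxop \<rho> M f x}"
      unfolding maxop_def using B t by (auto intro: less_le_trans SUP_upper)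
    with B assms show "\<exists>T. open T \<and> x \<in> T \<and> T \<subseteq> {x. t < maxop \<rho> M f x}" by blast
  qed
  then show "{x \<in> space borel. t < maxop \<rho> M f x} \<in> sets borel" by simp
qed

lemma enn_powr_mono:
  assumes "a \<le> b" "0 \<le> p"
  shows "enn_powr a p \<le> enn_powr b p"
proof (cases "b = \<infinity>")
  case False
  with assms(1) have "a \<noteq> \<infinity>" by (auto simp: top_unique)
  with False assms show ?thesis
    by (auto simp: enn_powr_def less_top intro!: ennreal_leI powr_mono2 enn2real_mono)
qed (simp add: enn_powr_def)

lemma enn_powr_mult:
  assumes "0 < k" "0 < p"
  shows "enn_powr (ennreal k * a) p = ennreal (k powr p) * enn_powr a p"
proof (cases "a = \<infinity>")
  case True
  with assms show ?thesis by (simp add: enn_powr_def ennreal_mult_top)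
next
  case False
  then obtain a' where a: "a = ennreal a'" "0 \<le> a'" by (cases a) auto
  with assms have "ennreal k * a = ennreal (k * a')" by (simp add: ennreal_mult)
  with assms a show ?thesis
    by (simp add: enn_powr_def powr_mult ennreal_mult[symmetric] ennreal_mult_eq_top_iff)
qed

lemma enn_powr_sum_le:
  assumes "finite A" "A \<noteq> {}" "0 < p"
  shows "enn_powr (\<Sum>s\<in>A. b s) p \<le> ennreal (real (card A) powr p) * (\<Sum>s\<in>A. enn_powr (b s) p)"
proof -
  have "Max (b ` A) \<in> b ` A" using assms by (intro Max_in) auto
  then obtain s0 where "s0 \<in> A" "b s0 = Max (b ` A)" by auto
  with assms have s0: "s0 \<in> A" "\<And>s. s \<in> A \<Longrightarrow> b s \<le> b s0" by auto
  have "(\<Sum>s\<in>A. b s) \<le> ennreal (real (card A)) * b s0"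
    using sum_mono[of A b "\<lambda>_. b s0"] s0 by (simp add: ennreal_of_nat_eq_real_of_nat)
  then have "enn_powr (\<Sum>s\<in>A. b s) p \<le> enn_powr (ennreal (real (card A)) * b s0) p"
    using assms by (intro enn_powr_mono) auto
  also have "\<dots> = ennreal (real (card A) powr p) * enn_powr (b s0) p"
    using assms by (intro enn_powr_mult) (auto simp: card_gt_0_iff)
  also have "\<dots> \<le> ennreal (real (card A) powr p) * (\<Sum>s\<in>A. enn_powr (b s) p)"
    using assms s0 by (intro mult_left_mono member_le_sum) auto
  finally show ?thesis .
qed

lemma borel_measurable_enn_powr [measurable]:
  assumes [measurable]: "h \<in> borel_measurable M"
  shows "(\<lambda>x. enn_powr (h x) p) \<in> borel_measurable M"
  unfolding enn_powr_def by measurable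

lemma ennreal_two_power: "ennreal (2 ^ n) = 2 ^ n"
  by (metis ennreal_numeral ennreal_power zero_le_numeral)

lemma ennreal_less_sum_imp:
  fixes a :: "'s \<Rightarrow> ennreal"
  assumes "finite A" "0 < t" "ennreal t < (\<Sum>s\<in>A. a s)"
  shows "\<exists>s\<in>A. ennreal (t / card A) < a s"
proof (rule ccontr)
  assume "\<not> ?thesis"
  then have "(\<Sum>s\<in>A. a s) \<le> (\<Sum>s\<in>A. ennreal (t / card A))"
    by (intro sum_mono) (auto simp: not_less)
  also have "\<dots> = ennreal t"
  proof -
    have "A \<noteq> {}" using assms(3) by auto
    with assms(1,2) show ?thesis
      by (simp add: ennreal_mult[symmetric] ennreal_of_nat_eq_real_of_nat card_gt_0_iff)
  qed
  finally show False using assms(3) by simp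
qed

section \<open>Monotone norms\<close>

locale monotone_norm =
  fixes N :: "real^'n::finite \<Rightarrow> real"
  assumes triangle: "N (x + y) \<le> N x + N y"
    and scaleR: "N (c *\<^sub>R x) = \<bar>c\<bar> * N x"
    and mono: "\<bar>x\<bar> \<le> \<bar>y\<bar> \<Longrightarrow> N x \<le> N y"
    and coercive: "\<exists>K>0. \<forall>x. norm x \<le> K * N x"
begin

abbreviation dist_N :: "real^'n \<Rightarrow> real^'n \<Rightarrow> real" where
  "dist_N \<equiv> \<lambda>x y. N (x - y)"

definition Nball :: "real^'n \<Rightarrow> real \<Rightarrow> (real^'n) set" where
  "Nball m r = {y. N (y - m) < r}"

lemma N_nonneg [simp]: "0 \<le> N x"
  using triangle[of x "- x"] scaleR[of "- 1" x] scaleR[of 0 x] by simp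

lemma N_abs [simp]: "N \<bar>x\<bar> = N x"
  by (rule antisym; rule mono) simp_all

lemma N_reflect [simp]: "N (reflect S x) = N x"
  by (metis N_abs abs_reflect)

lemma N_abs_diff_le: "N (\<bar>u\<bar> - \<bar>v\<bar>) \<le> N (u - v)"
  by (rule mono) (rule abs_triangle_ineq3)

lemma continuous_on_N: "continuous_on UNIV N"
proof (rule convex_on_continuous)
  show "convex_on UNIV N"
  proof (rule convex_onI)
    fix t :: real and x y assume "0 < t" "t < 1"
    then show "N ((1 - t) *\<^sub>R x + t *\<^sub>R y) \<le> (1 - t) * N x + t * N y"
      using triangle[of "(1 - t) *\<^sub>R x" "t *\<^sub>R y"] by (simp add: scaleR)
  qed simp
qed simp

lemma open_Nball: "open (Nball m r)"
  unfolding Nball_def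
  by (rule open_Collect_less) (auto intro!: continuous_on_compose2[OF continuous_on_N] continuous_intros)

lemma Nball_borel [measurable]: "Nball m r \<in> sets borel"
  using open_Nball by (rule borel_open)

lemma bounded_Nball: "bounded (Nball m r)"
proof -
  obtain K where "0 < K" and K: "\<And>x. norm x \<le> K * N x"
    using coercive by blast
  then have "Nball m r \<subseteq> cball m (K * r)"
    using K[of "_ - m"] by (force simp: Nball_def dist_norm norm_minus_commute
        intro: order_trans mult_left_mono less_imp_le)
  then show ?thesis by (rule bounded_subset[OF bounded_cball])
qed

lemma emeasure_mu_Nball_finite: "emeasure mu (Nball m r) < \<infinity>"
  using emeasure_mu_le_lborel[OF Nball_borel] emeasure_bounded_finite[OF bounded_Nball]
  by (rule le_less_trans)

lemma rho_balls_mu: "rho_balls dist_N mu = {Nball m r |m r. 0 < r}"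
  by (auto simp: rho_balls_def Nball_def)

lemma rho_balls_mu_plus:
  "rho_balls dist_N mu_plus = {orthant \<inter> Nball m r |m r. m \<in> orthant \<and> 0 < r}"
  by (auto simp: rho_balls_def Nball_def)

lemma borel_measurable_maxop_mu [measurable]: "maxop dist_N mu f \<in> borel_measurable borel"
  by (rule borel_measurable_maxop) (auto simp: rho_balls_mu open_Nball)

lemma borel_measurable_maxop_mu_plus [measurable]:
  "maxop dist_N mu_plus f \<in> borel_measurable borel"
  by (rule borel_measurable_maxop) (auto simp: rho_balls_mu_plus open_Nball open_orthant)

lemma emeasure_mu_Nball_le:
  assumes "m \<in> orthant"
  shows "emeasure mu (Nball m r) \<le> 2 ^ CARD('n) * emeasure mu (orthant \<inter> Nball m r)"
proof -
  have "emeasure mu (Nball m r) = (\<Sum>S\<in>UNIV. \<integral>\<^sup>+ z. indicator (Nball m r) (reflect S z) \<partial>mu_plus)"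
    using nn_integral_mu_eq_sum_orthants[of "indicator (Nball m r)"] by simp
  also have "\<dots> \<le> (\<Sum>S\<in>(UNIV :: 'n set set). \<integral>\<^sup>+ z. indicator (Nball m r) z \<partial>mu_plus)"
  proof (intro sum_mono nn_integral_mono)
    fix S and z :: "real^'n" assume "z \<in> space mu_plus"
    then have "N (z - m) \<le> N (reflect S z - m)"
      using N_abs_diff_le[of "reflect S z" m] assms by (simp add: abs_orthant)
    then show "indicator (Nball m r) (reflect S z) \<le> (indicator (Nball m r) z :: ennreal)"
      by (auto simp: Nball_def split: split_indicator)
  qed
  also have "\<dots> = 2 ^ CARD('n) * emeasure mu (orthant \<inter> Nball m r)"
    by (simp add: nn_integral_indicator_mu_plus)
  finally show ?thesis .
qed

lemma maxop_mu_plus_le: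
  assumes "x \<in> orthant"
  shows "maxop dist_N mu_plus g x \<le> 2 ^ CARD('n) * maxop dist_N mu (\<lambda>y. indicator orthant y * g y) x"
proof (rule maxop_leI)
  let ?f = "\<lambda>y. indicator orthant y * g y"
  fix B assume B: "B \<in> rho_balls dist_N mu_plus" "x \<in> B"
  then obtain m r where m: "m \<in> orthant" "0 < r" and B_eq: "B = orthant \<inter> Nball m r"
    by (auto simp: rho_balls_mu_plus)
  have "(\<integral>\<^sup>+ y \<in> B. ennreal \<bar>g y\<bar> \<partial>mu_plus) = (\<integral>\<^sup>+ y \<in> Nball m r. ennreal \<bar>?f y\<bar> \<partial>mu)"
    unfolding B_eq
    by (subst set_nn_integral_mu_plus) (auto intro!: nn_integral_cong split: split_indicator)
  also have "\<dots> \<le> maxop dist_N mu ?f x * emeasure mu (Nball m r)"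
    using B B_eq m emeasure_mu_Nball_finite
    by (intro set_nn_integral_le_maxop) (auto simp: rho_balls_mu)
  also have "\<dots> \<le> maxop dist_N mu ?f x * (2 ^ CARD('n) * emeasure mu B)"
    using emeasure_mu_Nball_le[OF m(1)] B_eq by (intro mult_left_mono) auto
  also have "\<dots> = 2 ^ CARD('n) * maxop dist_N mu ?f x * emeasure mu_plus B"
    by (simp add: B_eq emeasure_mu_plus mult_ac)
  finally show "(\<integral>\<^sup>+ y \<in> B. ennreal \<bar>g y\<bar> \<partial>mu_plus)
      \<le> 2 ^ CARD('n) * maxop dist_N mu ?f x * emeasure mu_plus B" .
qed

lemma N_shift_le:
  assumes "0 \<le> a" "a \<le> b"
  shows "N (y - (c + a *\<^sub>R 1)) + a * N 1 \<le> N (y - (c + b *\<^sub>R 1)) + b * N 1"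
proof -
  have "N (y - (c + a *\<^sub>R 1)) = N ((y - (c + b *\<^sub>R 1)) + (b - a) *\<^sub>R 1)"
    by (rule arg_cong[where f = N]) (simp add: algebra_simps)
  also have "\<dots> \<le> N (y - (c + b *\<^sub>R 1)) + (b - a) * N 1"
    using triangle[of "y - (c + b *\<^sub>R 1)" "(b - a) *\<^sub>R 1"] scaleR[of "b - a" 1] assms
    by simp
  finally show ?thesis by (simp add: algebra_simps)
qed

text \<open>The centre is pushed into the open orthant along the diagonal, and the radius shrunk just
  enough to stay inside the original ball.\<close>

definition shifted_ball :: "real^'n \<Rightarrow> real \<Rightarrow> real \<Rightarrow> (real^'n) set" where
  "shifted_ball c r \<delta> = orthant \<inter> Nball (c + \<delta> *\<^sub>R 1) (r - \<delta> * N 1)"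

lemma mem_shifted_ball_iff:
  "y \<in> shifted_ball c r \<delta> \<longleftrightarrow> y \<in> orthant \<and> N (y - (c + \<delta> *\<^sub>R 1)) + \<delta> * N 1 < r"
  by (auto simp: shifted_ball_def Nball_def)

lemma shifted_ball_antimono:
  assumes "0 \<le> a" "a \<le> b"
  shows "shifted_ball c r b \<subseteq> shifted_ball c r a"
proof
  fix y assume "y \<in> shifted_ball c r b"
  with N_shift_le[OF assms, of y c] show "y \<in> shifted_ball c r a"
    by (simp add: mem_shifted_ball_iff)
qed

lemma shifted_ball_subset: "0 \<le> \<delta> \<Longrightarrow> shifted_ball c r \<delta> \<subseteq> orthant \<inter> Nball c r"
  using shifted_ball_antimono[of 0 \<delta> c r] by (simp add: shifted_ball_def)

lemma mem_shifted_ball: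
  assumes "y \<in> orthant" "0 < \<delta>" "\<delta> * (2 * N 1 + 1) \<le> r - N (y - c)"
  shows "y \<in> shifted_ball c r \<delta>"
proof -
  have "N (y - (c + \<delta> *\<^sub>R 1)) = N ((y - c) + (- \<delta>) *\<^sub>R 1)"
    by (rule arg_cong[where f = N]) (simp add: algebra_simps)
  also have "\<dots> \<le> N (y - c) + \<delta> * N 1"
    using triangle[of "y - c" "(- \<delta>) *\<^sub>R 1"] scaleR[of "- \<delta>" 1] assms(2) by simp
  finally have "N (y - (c + \<delta> *\<^sub>R 1)) \<le> N (y - c) + \<delta> * N 1" .
  moreover have "\<delta> * (2 * N 1 + 1) = 2 * (\<delta> * N 1) + \<delta>"
    by (simp add: algebra_simps)
  ultimately show ?thesis
    using assms unfolding mem_shifted_ball_iff by linarith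
qed

lemma shifted_ball_rho_ball:
  assumes "0 \<le> c" "0 < \<delta>" "x \<in> shifted_ball c r \<delta>"
  shows "shifted_ball c r \<delta> \<in> rho_balls dist_N mu_plus"
proof -
  have "c + \<delta> *\<^sub>R 1 \<in> orthant"
    using assms(1,2) by (auto simp: orthant_def less_eq_vec_def add_nonneg_pos)
  moreover have "0 < r - \<delta> * N 1"
    using assms(3) N_nonneg[of "x - (c + \<delta> *\<^sub>R 1)"] unfolding mem_shifted_ball_iff by linarith
  ultimately show ?thesis
    unfolding rho_balls_mu_plus shifted_ball_def by blast
qed

lemma incseq_shifted_ball:
  assumes "0 < \<epsilon>"
  shows "incseq (\<lambda>n. shifted_ball c r (\<epsilon> / Suc n))"
proof (rule incseq_SucI)
  fix n
  have "\<epsilon> / Suc (Suc n) \<le> \<epsilon> / Suc n"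
    using assms by (intro divide_left_mono) auto
  with assms show "shifted_ball c r (\<epsilon> / Suc n) \<subseteq> shifted_ball c r (\<epsilon> / Suc (Suc n))"
    by (intro shifted_ball_antimono) simp_all
qed

lemma orthant_Nball_exhaustion:
  assumes "0 \<le> c" "x \<in> orthant \<inter> Nball c r"
  obtains B where "incseq B" "\<And>n. B n \<in> rho_balls dist_N mu_plus" "\<And>n. x \<in> B n"
    "(\<Union>n. B n) = orthant \<inter> Nball c r"
proof
  define \<epsilon> where "\<epsilon> = (r - N (x - c)) / (2 * N 1 + 1)"
  define \<delta> :: "nat \<Rightarrow> real" where "\<delta> n = \<epsilon> / Suc n" for n
  have N1: "0 < 2 * N 1 + 1"
    by (rule add_nonneg_pos) simp_all
  have \<epsilon>: "0 < \<epsilon>"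
    using assms(2) N1 by (simp add: \<epsilon>_def Nball_def)
  then have \<delta>_pos: "0 < \<delta> n" and \<delta>_le: "\<delta> n \<le> \<epsilon>" for n
    by (simp_all add: \<delta>_def divide_le_eq)
  show "incseq (\<lambda>n. shifted_ball c r (\<delta> n))"
    unfolding \<delta>_def using \<epsilon> by (rule incseq_shifted_ball)
  show x_mem: "x \<in> shifted_ball c r (\<delta> n)" for n
  proof (rule mem_shifted_ball)
    have "\<delta> n * (2 * N 1 + 1) \<le> \<epsilon> * (2 * N 1 + 1)"
      using \<delta>_le N1 by (intro mult_right_mono) auto
    also have "\<dots> = r - N (x - c)"
      using N1 by (simp add: \<epsilon>_def)
    finally show "\<delta> n * (2 * N 1 + 1) \<le> r - N (x - c)" .
  qed (use assms \<delta>_pos in auto)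
  show "shifted_ball c r (\<delta> n) \<in> rho_balls dist_N mu_plus" for n
    using assms(1) \<delta>_pos x_mem by (rule shifted_ball_rho_ball)
  show "(\<Union>n. shifted_ball c r (\<delta> n)) = orthant \<inter> Nball c r"
  proof
    show "(\<Union>n. shifted_ball c r (\<delta> n)) \<subseteq> orthant \<inter> Nball c r"
      using shifted_ball_subset \<delta>_pos less_imp_le by blast
    show "orthant \<inter> Nball c r \<subseteq> (\<Union>n. shifted_ball c r (\<delta> n))"
    proof
      fix y assume y: "y \<in> orthant \<inter> Nball c r"
      then have e: "0 < r - N (y - c)" by (simp add: Nball_def)
      obtain n :: nat where "\<epsilon> * (2 * N 1 + 1) / (r - N (y - c)) < n"
        using reals_Archimedean2 by blast
      then have "\<delta> n * (2 * N 1 + 1) \<le> r - N (y - c)"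
        using e \<epsilon> N1 by (simp add: \<delta>_def field_simps)
      with y \<delta>_pos have "y \<in> shifted_ball c r (\<delta> n)" by (intro mem_shifted_ball) auto
      then show "y \<in> (\<Union>n. shifted_ball c r (\<delta> n))" by blast
    qed
  qed
qed

lemma set_nn_integral_orthant_Nball_le_maxop:
  assumes "0 \<le> c" "x \<in> orthant \<inter> Nball c r" "g \<in> borel_measurable borel"
  shows "(\<integral>\<^sup>+ y \<in> orthant \<inter> Nball c r. ennreal \<bar>g y\<bar> \<partial>mu_plus)
    \<le> maxop dist_N mu_plus g x * emeasure mu_plus (orthant \<inter> Nball c r)"
proof -
  obtain B where B: "incseq B" "\<And>n. B n \<in> rho_balls dist_N mu_plus" "\<And>n. x \<in> B n"
    and B_Union: "(\<Union>n. B n) = orthant \<inter> Nball c r"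
    using orthant_Nball_exhaustion[OF assms(1,2)] by blast
  have "B n \<in> sets mu_plus" for n
    using B(2)[of n] by (auto simp: rho_balls_mu_plus sets_mu_plus)
  moreover have "emeasure mu_plus (orthant \<inter> Nball c r) < \<infinity>"
    using emeasure_mono[of "orthant \<inter> Nball c r" "Nball c r" mu] emeasure_mu_Nball_finite[of c r]
    by (simp add: emeasure_mu_plus)
  ultimately show ?thesis
    using set_nn_integral_le_maxop_incseq[OF B, of g] assms(3)
    by (simp add: B_Union borel_measurable_mu_plus)
qed

lemma emeasure_orthant_Nball_abs_le:
  "emeasure mu (orthant \<inter> Nball \<bar>m\<bar> r) \<le> emeasure mu (Nball m r)"
proof -
  let ?S = "{i. m$i < 0}"
  have "emeasure mu (orthant \<inter> Nball \<bar>m\<bar> r)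
      = (\<integral>\<^sup>+ z. indicator (orthant \<inter> Nball \<bar>m\<bar> r) (reflect ?S z) \<partial>mu)"
    by (subst nn_integral_mu_reflect) simp_all
  also have "\<dots> \<le> (\<integral>\<^sup>+ z. indicator (Nball m r) z \<partial>mu)"
  proof (rule nn_integral_mono)
    fix z :: "real^'n"
    have "reflect ?S z - \<bar>m\<bar> = reflect ?S (z - m)"
      by (simp add: reflect_diff reflect_abs)
    then show "indicator (orthant \<inter> Nball \<bar>m\<bar> r) (reflect ?S z) \<le> (indicator (Nball m r) z :: ennreal)"
      by (auto simp: Nball_def split: split_indicator)
  qed
  finally show ?thesis by simp
qed

lemma maxop_mu_le_sum:
  assumes "\<forall>i. x$i \<noteq> 0" and [measurable]: "f \<in> borel_measurable borel"
  shows "maxop dist_N mu f x \<le> (\<Sum>S\<in>UNIV. maxop dist_N mu_plus (\<lambda>z. f (reflect S z)) \<bar>x\<bar>)"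
proof (rule maxop_leI)
  let ?R = "\<Sum>S\<in>UNIV. maxop dist_N mu_plus (\<lambda>z. f (reflect S z)) \<bar>x\<bar>"
  fix B assume B: "B \<in> rho_balls dist_N mu" "x \<in> B"
  then obtain m r where B_eq: "B = Nball m r"
    by (auto simp: rho_balls_mu)
  let ?B' = "orthant \<inter> Nball \<bar>m\<bar> r"
  have x': "\<bar>x\<bar> \<in> ?B'"
    using abs_in_orthant[OF assms(1)] N_abs_diff_le[of x m] B(2) by (auto simp: B_eq Nball_def)
  have "(\<integral>\<^sup>+ y \<in> B. ennreal \<bar>f y\<bar> \<partial>mu)
      = (\<Sum>S\<in>UNIV. \<integral>\<^sup>+ z. ennreal \<bar>f (reflect S z)\<bar> * indicator B (reflect S z) \<partial>mu_plus)"
    by (rule nn_integral_mu_eq_sum_orthants) (simp add: B_eq)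
  also have "\<dots> \<le> (\<Sum>S\<in>UNIV. \<integral>\<^sup>+ z \<in> ?B'. ennreal \<bar>f (reflect S z)\<bar> \<partial>mu_plus)"
  proof (intro sum_mono nn_integral_mono)
    fix S and z :: "real^'n" assume "z \<in> space mu_plus"
    then have "N (z - \<bar>m\<bar>) \<le> N (reflect S z - m)"
      using N_abs_diff_le[of "reflect S z" m] by (simp add: abs_orthant)
    then show "ennreal \<bar>f (reflect S z)\<bar> * indicator B (reflect S z)
        \<le> ennreal \<bar>f (reflect S z)\<bar> * indicator ?B' z"
      using \<open>z \<in> space mu_plus\<close> by (auto simp: B_eq Nball_def split: split_indicator)
  qed
  also have "\<dots> \<le> (\<Sum>S\<in>UNIV. maxop dist_N mu_plus (\<lambda>z. f (reflect S z)) \<bar>x\<bar> * emeasure mu_plus ?B')"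
    using x' by (intro sum_mono set_nn_integral_orthant_Nball_le_maxop) auto
  also have "\<dots> = ?R * emeasure mu ?B'"
    by (simp add: sum_distrib_right emeasure_mu_plus)
  also have "\<dots> \<le> ?R * emeasure mu B"
    unfolding B_eq by (intro mult_left_mono emeasure_orthant_Nball_abs_le) simp
  finally show "(\<integral>\<^sup>+ y \<in> B. ennreal \<bar>f y\<bar> \<partial>mu) \<le> ?R * emeasure mu B" .
qed

lemma AE_enn_powr_maxop_mu_le:
  assumes "0 < p" "f \<in> borel_measurable borel"
  shows "AE x in mu. enn_powr (maxop dist_N mu f x) p \<le> ennreal ((2 ^ CARD('n)) powr p) *
    (\<Sum>S\<in>UNIV. enn_powr (maxop dist_N mu_plus (\<lambda>z. f (reflect S z)) \<bar>x\<bar>) p)"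
  using AE_mu_coords_nonzero
proof eventually_elim
  case (elim x)
  then have "enn_powr (maxop dist_N mu f x) p
      \<le> enn_powr (\<Sum>S\<in>UNIV. maxop dist_N mu_plus (\<lambda>z. f (reflect S z)) \<bar>x\<bar>) p"
    using assms by (intro enn_powr_mono maxop_mu_le_sum) simp_all
  also have "\<dots> \<le> ennreal ((2 ^ CARD('n)) powr p) *
      (\<Sum>S\<in>UNIV. enn_powr (maxop dist_N mu_plus (\<lambda>z. f (reflect S z)) \<bar>x\<bar>) p)"
    using assms(1) enn_powr_sum_le[of "UNIV :: 'n set set"] by simp
  finally show ?case .
qed

lemma AE_maxop_mu_superlevel:
  assumes "0 < t" "f \<in> borel_measurable borel"
  shows "AE x in mu. ennreal t < maxop dist_N mu f x \<longrightarrow>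
    (\<exists>S. ennreal (t / 2 ^ CARD('n)) < maxop dist_N mu_plus (\<lambda>z. f (reflect S z)) \<bar>x\<bar>)"
  using AE_mu_coords_nonzero
proof eventually_elim
  case (elim x)
  show ?case
  proof
    assume "ennreal t < maxop dist_N mu f x"
    then have "ennreal t < (\<Sum>S\<in>UNIV. maxop dist_N mu_plus (\<lambda>z. f (reflect S z)) \<bar>x\<bar>)"
      using maxop_mu_le_sum[OF elim assms(2)] by (rule less_le_trans)
    then show "\<exists>S. ennreal (t / 2 ^ CARD('n)) < maxop dist_N mu_plus (\<lambda>z. f (reflect S z)) \<bar>x\<bar>"
      using ennreal_less_sum_imp[of "UNIV :: 'n set set"] assms(1) by simp
  qed
qed

lemma nn_integral_enn_powr_maxop_mu_le:
  assumes "0 < p" and [measurable]: "f \<in> borel_measurable borel"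
  shows "(\<integral>\<^sup>+ x. enn_powr (maxop dist_N mu f x) p \<partial>mu) \<le> ennreal ((2 ^ CARD('n)) powr p) * 2 ^ CARD('n) *
    (\<Sum>S\<in>UNIV. \<integral>\<^sup>+ z. enn_powr (maxop dist_N mu_plus (\<lambda>z. f (reflect S z)) z) p \<partial>mu_plus)"
proof -
  let ?c = "ennreal ((2 ^ CARD('n)) powr p)"
  let ?h = "\<lambda>S. maxop dist_N mu_plus (\<lambda>z. f (reflect S z))"
  have "(\<integral>\<^sup>+ x. enn_powr (maxop dist_N mu f x) p \<partial>mu)
      \<le> (\<integral>\<^sup>+ x. ?c * (\<Sum>S\<in>UNIV. enn_powr (?h S \<bar>x\<bar>) p) \<partial>mu)"
    using AE_enn_powr_maxop_mu_le[OF assms] by (intro nn_integral_mono_AE) simp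
  also have "\<dots> = ?c * (\<Sum>S\<in>UNIV. \<integral>\<^sup>+ x. enn_powr (?h S \<bar>x\<bar>) p \<partial>mu)"
    by (simp add: nn_integral_cmult nn_integral_sum)
  also have "\<dots> = ?c * (\<Sum>S\<in>UNIV. 2 ^ CARD('n) * (\<integral>\<^sup>+ z. enn_powr (?h S z) p \<partial>mu_plus))"
    using nn_integral_mu_abs[OF borel_measurable_enn_powr[OF borel_measurable_maxop_mu_plus]]
    by simp
  finally show ?thesis
    by (simp add: sum_distrib_left mult.assoc)
qed

lemma emeasure_maxop_mu_superlevel_le:
  assumes "0 < t" and [measurable]: "f \<in> borel_measurable borel"
  shows "emeasure mu {x \<in> space mu. ennreal t < maxop dist_N mu f x} \<le> 2 ^ CARD('n) *
    (\<Sum>S\<in>UNIV. emeasure mu_plus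
      {z \<in> space mu_plus. ennreal (t / 2 ^ CARD('n)) < maxop dist_N mu_plus (\<lambda>z. f (reflect S z)) z})"
proof -
  define A where "A S = {z \<in> space mu_plus.
    ennreal (t / 2 ^ CARD('n)) < maxop dist_N mu_plus (\<lambda>z. f (reflect S z)) z}" for S
  have A: "A S \<subseteq> orthant" "A S \<in> sets borel" for S
    unfolding A_def by auto measurable
  have "emeasure mu {x \<in> space mu. ennreal t < maxop dist_N mu f x}
      \<le> emeasure mu (\<Union>S. {x. \<bar>x\<bar> \<in> A S})"
    using AE_maxop_mu_superlevel[OF assms] AE_mu_coords_nonzero A
    by (intro emeasure_mono_AE) (auto simp: A_def abs_in_orthant elim!: AE_mp)
  also have "\<dots> \<le> (\<Sum>S\<in>UNIV. emeasure mu {x. \<bar>x\<bar> \<in> A S})"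
    using A by (intro emeasure_subadditive_finite) auto
  also have "\<dots> = 2 ^ CARD('n) * (\<Sum>S\<in>UNIV. emeasure mu_plus (A S))"
    using A by (simp add: emeasure_mu_abs_vimage sum_distrib_left)
  finally show ?thesis
    by (simp add: A_def)
qed

lemma maxop_mu_plus_superlevel_subset:
  assumes "0 < t"
  shows "{x \<in> space mu_plus. ennreal t < maxop dist_N mu_plus g x}
    \<subseteq> {x \<in> space mu. ennreal (t / 2 ^ CARD('n)) < maxop dist_N mu (\<lambda>y. indicator orthant y * g y) x}"
proof safe
  fix x assume "x \<in> space mu_plus" "ennreal t < maxop dist_N mu_plus g x"
  then have "ennreal t < maxop dist_N mu (\<lambda>y. indicator orthant y * g y) x * ennreal (2 ^ CARD('n))"
    using maxop_mu_plus_le[of x g] by (simp add: ennreal_two_power mult.commute)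
  with assms show "ennreal (t / 2 ^ CARD('n)) < maxop dist_N mu (\<lambda>y. indicator orthant y * g y) x"
    by (simp add: divide_ennreal[symmetric] divide_less_ennreal)
qed simp

lemma Lp_bounded_mu_plus_if_mu:
  assumes "0 < p" "Lp_bounded dist_N mu p"
  shows "Lp_bounded dist_N mu_plus p"
proof -
  obtain C where C: "\<And>f. in_Lp mu p f \<Longrightarrow> (\<integral>\<^sup>+ x. enn_powr (maxop dist_N mu f x) p \<partial>mu)
      \<le> ennreal C * (\<integral>\<^sup>+ x. ennreal (\<bar>f x\<bar> powr p) \<partial>mu)"
    using assms(2) unfolding Lp_bounded_def by blast
  let ?K = "2 ^ CARD('n) :: real"
  have "(\<integral>\<^sup>+ x. enn_powr (maxop dist_N mu_plus g x) p \<partial>mu_plus)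
      \<le> ennreal (?K powr p * C) * (\<integral>\<^sup>+ x. ennreal (\<bar>g x\<bar> powr p) \<partial>mu_plus)"
    if g: "in_Lp mu_plus p g" for g
  proof -
    let ?f = "\<lambda>y. indicator orthant y * g y"
    let ?Mf = "maxop dist_N mu ?f"
    have "(\<integral>\<^sup>+ x. enn_powr (maxop dist_N mu_plus g x) p \<partial>mu_plus)
        \<le> (\<integral>\<^sup>+ x. enn_powr (ennreal ?K * ?Mf x) p \<partial>mu_plus)"
      using assms(1) maxop_mu_plus_le
      by (intro nn_integral_mono enn_powr_mono) (simp_all add: ennreal_two_power)
    also have "\<dots> = ennreal (?K powr p) * (\<integral>\<^sup>+ x. enn_powr (?Mf x) p \<partial>mu_plus)"
      using assms(1) by (simp add: enn_powr_mult nn_integral_cmult borel_measurable_mu_plus)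
    also have "\<dots> \<le> ennreal (?K powr p) * (\<integral>\<^sup>+ x. enn_powr (?Mf x) p \<partial>mu)"
      by (intro mult_left_mono nn_integral_mu_plus_le) simp
    also have "\<dots> \<le> ennreal (?K powr p) * (ennreal C * (\<integral>\<^sup>+ x. ennreal (\<bar>?f x\<bar> powr p) \<partial>mu))"
      using g assms(1) by (intro mult_left_mono C in_Lp_zero_extension) simp_all
    also have "\<dots> = ennreal (?K powr p * C) * (\<integral>\<^sup>+ x. ennreal (\<bar>g x\<bar> powr p) \<partial>mu_plus)"
      using nn_integral_zero_extension[of "\<lambda>t. \<bar>t\<bar> powr p" g]
      by (simp add: ennreal_mult' mult.assoc)
    finally show ?thesis .
  qed
  then show ?thesis unfolding Lp_bounded_def by blast
qed

lemma Lp_bounded_mu_if_mu_plus: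
  assumes "0 < p" "Lp_bounded dist_N mu_plus p"
  shows "Lp_bounded dist_N mu p"
proof -
  obtain C where C: "\<And>g. in_Lp mu_plus p g \<Longrightarrow> (\<integral>\<^sup>+ x. enn_powr (maxop dist_N mu_plus g x) p \<partial>mu_plus)
      \<le> ennreal C * (\<integral>\<^sup>+ x. ennreal (\<bar>g x\<bar> powr p) \<partial>mu_plus)"
    using assms(2) unfolding Lp_bounded_def by blast
  let ?K = "2 ^ CARD('n) :: real"
  have "(\<integral>\<^sup>+ x. enn_powr (maxop dist_N mu f x) p \<partial>mu)
      \<le> ennreal (?K powr p * ?K * ?K * C) * (\<integral>\<^sup>+ x. ennreal (\<bar>f x\<bar> powr p) \<partial>mu)"
    if f: "in_Lp mu p f" for f
  proof -
    have [measurable]: "f \<in> borel_measurable borel"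
      using f by (simp add: in_Lp_def cong: measurable_cong_sets)
    let ?I = "\<integral>\<^sup>+ x. ennreal (\<bar>f x\<bar> powr p) \<partial>mu"
    have h_bound: "(\<integral>\<^sup>+ z. enn_powr (maxop dist_N mu_plus (\<lambda>z. f (reflect S z)) z) p \<partial>mu_plus)
        \<le> ennreal C * ?I" for S
    proof -
      have "(\<integral>\<^sup>+ z. enn_powr (maxop dist_N mu_plus (\<lambda>z. f (reflect S z)) z) p \<partial>mu_plus)
          \<le> ennreal C * (\<integral>\<^sup>+ z. ennreal (\<bar>f (reflect S z)\<bar> powr p) \<partial>mu_plus)"
        by (intro C in_Lp_reflect f)
      also have "\<dots> \<le> ennreal C * ?I"
        by (intro mult_left_mono nn_integral_mu_plus_reflect_le) simp_all
      finally show ?thesis .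
    qed
    have "(\<integral>\<^sup>+ x. enn_powr (maxop dist_N mu f x) p \<partial>mu) \<le> ennreal (?K powr p) * 2 ^ CARD('n) *
        (\<Sum>S\<in>UNIV. \<integral>\<^sup>+ z. enn_powr (maxop dist_N mu_plus (\<lambda>z. f (reflect S z)) z) p \<partial>mu_plus)"
      using assms(1) by (rule nn_integral_enn_powr_maxop_mu_le) simp
    also have "\<dots> \<le> ennreal (?K powr p) * 2 ^ CARD('n) * (\<Sum>S\<in>(UNIV :: 'n set set). ennreal C * ?I)"
      by (intro mult_left_mono sum_mono h_bound) simp_all
    also have "\<dots> = ennreal (?K powr p) * ennreal ?K * ennreal ?K * ennreal C * ?I"
      by (simp add: ennreal_two_power mult_ac)
    also have "\<dots> = ennreal (?K powr p * ?K * ?K * C) * ?I"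
      by (simp add: ennreal_mult')
    finally show ?thesis .
  qed
  then show ?thesis unfolding Lp_bounded_def by blast
qed

lemma weak11_mu_plus_if_mu:
  assumes "weak11 dist_N mu"
  shows "weak11 dist_N mu_plus"
proof -
  obtain C where C: "\<And>f t. in_Lp mu 1 f \<Longrightarrow> 0 < t \<Longrightarrow>
      emeasure mu {x \<in> space mu. ennreal t < maxop dist_N mu f x}
        \<le> ennreal (C / t) * (\<integral>\<^sup>+ x. ennreal \<bar>f x\<bar> \<partial>mu)"
    using assms unfolding weak11_def by blast
  let ?K = "2 ^ CARD('n) :: real"
  have "emeasure mu_plus {x \<in> space mu_plus. ennreal t < maxop dist_N mu_plus g x}
      \<le> ennreal (C * ?K / t) * (\<integral>\<^sup>+ x. ennreal \<bar>g x\<bar> \<partial>mu_plus)"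
    if g: "in_Lp mu_plus 1 g" and t: "0 < t" for g t
  proof -
    let ?f = "\<lambda>y. indicator orthant y * g y"
    have "emeasure mu_plus {x \<in> space mu_plus. ennreal t < maxop dist_N mu_plus g x}
        \<le> emeasure mu {x \<in> space mu. ennreal (t / ?K) < maxop dist_N mu ?f x}"
      using maxop_mu_plus_superlevel_subset[OF t, of g] by (simp add: emeasure_mu_plus emeasure_mono)
    also have "\<dots> \<le> ennreal (C / (t / ?K)) * (\<integral>\<^sup>+ x. ennreal \<bar>?f x\<bar> \<partial>mu)"
      using g t by (intro C in_Lp_zero_extension) simp_all
    also have "\<dots> = ennreal (C * ?K / t) * (\<integral>\<^sup>+ x. ennreal \<bar>g x\<bar> \<partial>mu_plus)"
      using nn_integral_zero_extension[of abs g] by simp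
    finally show ?thesis .
  qed
  then show ?thesis unfolding weak11_def by blast
qed

lemma weak11_mu_if_mu_plus:
  assumes "weak11 dist_N mu_plus"
  shows "weak11 dist_N mu"
proof -
  obtain C where C: "\<And>g t. in_Lp mu_plus 1 g \<Longrightarrow> 0 < t \<Longrightarrow>
      emeasure mu_plus {x \<in> space mu_plus. ennreal t < maxop dist_N mu_plus g x}
        \<le> ennreal (C / t) * (\<integral>\<^sup>+ x. ennreal \<bar>g x\<bar> \<partial>mu_plus)"
    using assms unfolding weak11_def by blast
  let ?K = "2 ^ CARD('n) :: real"
  have "emeasure mu {x \<in> space mu. ennreal t < maxop dist_N mu f x}
      \<le> ennreal (?K * ?K * (C * ?K) / t) * (\<integral>\<^sup>+ x. ennreal \<bar>f x\<bar> \<partial>mu)"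
    if f: "in_Lp mu 1 f" and t: "0 < t" for f t
  proof -
    have [measurable]: "f \<in> borel_measurable borel"
      using f by (simp add: in_Lp_def cong: measurable_cong_sets)
    let ?I = "\<integral>\<^sup>+ x. ennreal \<bar>f x\<bar> \<partial>mu"
    have superlevel_bound: "emeasure mu_plus {z \<in> space mu_plus.
        ennreal (t / ?K) < maxop dist_N mu_plus (\<lambda>z. f (reflect S z)) z} \<le> ennreal (C * ?K / t) * ?I" for S
    proof -
      have "emeasure mu_plus {z \<in> space mu_plus.
          ennreal (t / ?K) < maxop dist_N mu_plus (\<lambda>z. f (reflect S z)) z}
          \<le> ennreal (C * ?K / t) * (\<integral>\<^sup>+ z. ennreal \<bar>f (reflect S z)\<bar> \<partial>mu_plus)"
        using C[OF in_Lp_reflect[OF f], of "t / ?K"] t by simp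
      also have "\<dots> \<le> ennreal (C * ?K / t) * ?I"
        by (intro mult_left_mono nn_integral_mu_plus_reflect_le[of "\<lambda>x. ennreal \<bar>f x\<bar>"]) simp_all
      finally show ?thesis .
    qed
    have "emeasure mu {x \<in> space mu. ennreal t < maxop dist_N mu f x} \<le> 2 ^ CARD('n) *
        (\<Sum>S\<in>UNIV. emeasure mu_plus
          {z \<in> space mu_plus. ennreal (t / ?K) < maxop dist_N mu_plus (\<lambda>z. f (reflect S z)) z})"
      using t by (rule emeasure_maxop_mu_superlevel_le) simp
    also have "\<dots> \<le> 2 ^ CARD('n) * (\<Sum>S\<in>(UNIV :: 'n set set). ennreal (C * ?K / t) * ?I)"
      by (intro mult_left_mono sum_mono superlevel_bound) simp_all
    also have "\<dots> = ennreal ?K * ennreal ?K * ennreal (C * ?K / t) * ?I"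
      by (simp add: ennreal_two_power mult_ac)
    also have "\<dots> = ennreal (?K * (?K * (C * ?K / t))) * ?I"
      by (simp only: ennreal_mult'[of ?K] zero_le_numeral zero_le_power mult.assoc)
    also have "\<dots> = ennreal (?K * ?K * (C * ?K) / t) * ?I"
      by (simp add: mult.assoc)
    finally show ?thesis .
  qed
  then show ?thesis unfolding weak11_def by blast
qed

lemma Lp_bounded_mu_iff_mu_plus:
  "0 < p \<Longrightarrow> Lp_bounded dist_N mu p \<longleftrightarrow> Lp_bounded dist_N mu_plus p"
  using Lp_bounded_mu_plus_if_mu Lp_bounded_mu_if_mu_plus by blast

lemma weak11_mu_iff_mu_plus: "weak11 dist_N mu \<longleftrightarrow> weak11 dist_N mu_plus"
  using weak11_mu_plus_if_mu weak11_mu_if_mu_plus by blast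

end

section \<open>The Euclidean, maximum and sum norms\<close>

lemma monotone_norm_norm: "monotone_norm (norm :: real^'n::finite \<Rightarrow> real)"
proof
  fix x y :: "real^'n"
  show "norm (x + y) \<le> norm x + norm y" by (rule norm_triangle_ineq)
  show "norm (c *\<^sub>R x) = \<bar>c\<bar> * norm x" for c by simp
  show "\<exists>K>0. \<forall>x::real^'n. norm x \<le> K * norm x" by (intro exI[of _ 1]) simp
  assume "\<bar>x\<bar> \<le> \<bar>y\<bar>"
  then show "norm x \<le> norm y"
    unfolding norm_vec_def by (intro L2_set_mono) (auto simp: less_eq_vec_def)
qed

lemma abs_nth_le_linfnorm: "\<bar>x$i\<bar> \<le> linfnorm x"
  unfolding linfnorm_def by (rule Max_ge) auto

lemma linfnorm_le: "(\<And>i. \<bar>x$i\<bar> \<le> b) \<Longrightarrow> linfnorm x \<le> b"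
  unfolding linfnorm_def by (subst Max_le_iff) auto

lemma monotone_norm_linfnorm: "monotone_norm (linfnorm :: real^'n::finite \<Rightarrow> real)"
proof
  fix x y :: "real^'n"
  show "linfnorm (x + y) \<le> linfnorm x + linfnorm y"
    by (rule linfnorm_le)
       (metis abs_triangle_ineq add_mono abs_nth_le_linfnorm order_trans vector_add_component)
  show "linfnorm (c *\<^sub>R x) = \<bar>c\<bar> * linfnorm x" for c
  proof (rule antisym)
    show "linfnorm (c *\<^sub>R x) \<le> \<bar>c\<bar> * linfnorm x"
      by (rule linfnorm_le) (simp add: abs_mult abs_nth_le_linfnorm mult_left_mono)
    have "linfnorm x \<in> (\<lambda>i. \<bar>x$i\<bar>) ` UNIV"
      unfolding linfnorm_def by (rule Max_in) auto
    then obtain i where "linfnorm x = \<bar>x$i\<bar>" by auto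
    then show "\<bar>c\<bar> * linfnorm x \<le> linfnorm (c *\<^sub>R x)"
      using abs_nth_le_linfnorm[of "c *\<^sub>R x" i] by (simp add: abs_mult)
  qed
  have "norm x \<le> real CARD('n) * linfnorm x" for x :: "real^'n"
  proof -
    have "norm x \<le> (\<Sum>i\<in>UNIV. \<bar>x$i\<bar>)" by (rule norm_le_l1_cart)
    also have "\<dots> \<le> (\<Sum>i\<in>(UNIV::'n set). linfnorm x)" by (intro sum_mono abs_nth_le_linfnorm)
    finally show ?thesis by simp
  qed
  then show "\<exists>K>0. \<forall>x::real^'n. norm x \<le> K * linfnorm x"
    by (intro exI[of _ "real CARD('n)"]) simp
  assume "\<bar>x\<bar> \<le> \<bar>y\<bar>"
  then show "linfnorm x \<le> linfnorm y"
    by (intro linfnorm_le) (metis abs_vec_nth less_eq_vec_def abs_nth_le_linfnorm order_trans)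
qed

lemma monotone_norm_l1norm: "monotone_norm (l1norm :: real^'n::finite \<Rightarrow> real)"
proof
  fix x y :: "real^'n"
  show "l1norm (x + y) \<le> l1norm x + l1norm y"
    unfolding l1norm_def sum.distrib[symmetric] by (intro sum_mono) (simp add: abs_triangle_ineq)
  show "l1norm (c *\<^sub>R x) = \<bar>c\<bar> * l1norm x" for c
    unfolding l1norm_def by (simp add: abs_mult sum_distrib_left)
  show "\<exists>K>0. \<forall>x::real^'n. norm x \<le> K * l1norm x"
    by (intro exI[of _ 1]) (simp add: l1norm_def norm_le_l1_cart)
  assume "\<bar>x\<bar> \<le> \<bar>y\<bar>"
  then show "l1norm x \<le> l1norm y"
    unfolding l1norm_def by (intro sum_mono) (auto simp: less_eq_vec_def)
qed

theorem proposition2p1: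
  fixes p :: real
  assumes "p > 1"
  shows "(Lp_bounded (rho2 :: real^'n \<Rightarrow> _) mu p \<longleftrightarrow> Lp_bounded (rho2 :: real^'n \<Rightarrow> _) mu_plus p)
       \<and> (weak11 (rho2 :: real^'n \<Rightarrow> _) mu \<longleftrightarrow> weak11 (rho2 :: real^'n \<Rightarrow> _) mu_plus)
       \<and> (Lp_bounded (rhoinf :: real^'n \<Rightarrow> _) mu p \<longleftrightarrow> Lp_bounded (rhoinf :: real^'n \<Rightarrow> _) mu_plus p)
       \<and> (weak11 (rhoinf :: real^'n \<Rightarrow> _) mu \<longleftrightarrow> weak11 (rhoinf :: real^'n \<Rightarrow> _) mu_plus)
       \<and> (Lp_bounded (rho1 :: real^'n \<Rightarrow> _) mu p \<longleftrightarrow> Lp_bounded (rho1 :: real^'n \<Rightarrow> _) mu_plus p)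
       \<and> (weak11 (rho1 :: real^'n \<Rightarrow> _) mu \<longleftrightarrow> weak11 (rho1 :: real^'n \<Rightarrow> _) mu_plus)"
proof -
  interpret l2: monotone_norm "norm :: real^'n \<Rightarrow> real"
    by (rule monotone_norm_norm)
  interpret linf: monotone_norm "linfnorm :: real^'n \<Rightarrow> real"
    by (rule monotone_norm_linfnorm)
  interpret l1: monotone_norm "l1norm :: real^'n \<Rightarrow> real"
    by (rule monotone_norm_l1norm)
  have metrics: "(rho2 :: real^'n \<Rightarrow> _) = (\<lambda>x y. norm (x - y))"
    "(rhoinf :: real^'n \<Rightarrow> _) = (\<lambda>x y. linfnorm (x - y))"
    "(rho1 :: real^'n \<Rightarrow> _) = (\<lambda>x y. l1norm (x - y))"
    by (simp_all add: fun_eq_iff rho2_def rhoinf_def rho1_def)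
  have "0 < p" using assms by simp
  then show ?thesis
    unfolding metrics
    using l2.Lp_bounded_mu_iff_mu_plus l2.weak11_mu_iff_mu_plus
      linf.Lp_bounded_mu_iff_mu_plus linf.weak11_mu_iff_mu_plus
      l1.Lp_bounded_mu_iff_mu_plus l1.weak11_mu_iff_mu_plus
    by blast
qed

end
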